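(* (1) There exists an infinite family of connected subcubic graphs $G$, each containing a pair of open twins of degree $1$, such that $\gamma^{LD}(G)>\frac{n(G)}{2}$. (2) There exists an infinite family of connected subcubic graphs $G$, each containing a pair of open twins of degree $2$, such that $\gamma^{LD}(G)>\frac{n(G)}{2}$.
   Context: All graphs are finite and simple; $n(G)$ is the number of vertices. A graph is subcubic if every vertex has degree at most $3$. Two distinct vertices $u,v$ are open twins of degree $d$ if $N(u)=N(v)$ and $|N(u)|=d$. For $S\subseteq V(G)$, $I(v)=N[v]\cap S$. A set $S$ is locating-dominating if every vertex $v$ has $I(v)\ne\emptyset$ and $I(u)\neq I(v)$ for all distinct $u,v\in V(G)\setminus S$. $\gamma^{LD}(G)$ denotes the minimum size of a locating-dominating set of $G$. *)

theory Defs
  imports Main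
begin

definition simple_graph :: "'a set \<Rightarrow> ('a \<Rightarrow> 'a \<Rightarrow> bool) \<Rightarrow> bool" where
  "simple_graph V E \<longleftrightarrow> finite V \<and> (\<forall>u v. E u v \<longrightarrow> u \<in> V \<and> v \<in> V)
     \<and> (\<forall>u v. E u v \<longrightarrow> E v u) \<and> (\<forall>v. \<not> E v v)"

definition nbhd :: "'a set \<Rightarrow> ('a \<Rightarrow> 'a \<Rightarrow> bool) \<Rightarrow> 'a \<Rightarrow> 'a set" where
  "nbhd V E v = {u \<in> V. E v u}"

definition closed_nbhd :: "'a set \<Rightarrow> ('a \<Rightarrow> 'a \<Rightarrow> bool) \<Rightarrow> 'a \<Rightarrow> 'a set" where
  "closed_nbhd V E v = insert v (nbhd V E v)"

definition subcubic :: "'a set \<Rightarrow> ('a \<Rightarrow> 'a \<Rightarrow> bool) \<Rightarrow> bool" where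
  "subcubic V E \<longleftrightarrow> (\<forall>v\<in>V. card (nbhd V E v) \<le> 3)"

definition connected_graph :: "'a set \<Rightarrow> ('a \<Rightarrow> 'a \<Rightarrow> bool) \<Rightarrow> bool" where
  "connected_graph V E \<longleftrightarrow> V \<noteq> {} \<and> (\<forall>u\<in>V. \<forall>v\<in>V. E\<^sup>*\<^sup>* u v)"

definition open_twins :: "'a set \<Rightarrow> ('a \<Rightarrow> 'a \<Rightarrow> bool) \<Rightarrow> nat \<Rightarrow> 'a \<Rightarrow> 'a \<Rightarrow> bool" where
  "open_twins V E d u v \<longleftrightarrow> u \<in> V \<and> v \<in> V \<and> u \<noteq> v \<and>
     nbhd V E u = nbhd V E v \<and> card (nbhd V E u) = d"

definition locating_dominating :: "'a set \<Rightarrow> ('a \<Rightarrow> 'a \<Rightarrow> bool) \<Rightarrow> 'a set \<Rightarrow> bool" where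
  "locating_dominating V E S \<longleftrightarrow> S \<subseteq> V \<and>
     (\<forall>v\<in>V. closed_nbhd V E v \<inter> S \<noteq> {}) \<and>
     (\<forall>u\<in>V - S. \<forall>v\<in>V - S. u \<noteq> v \<longrightarrow> closed_nbhd V E u \<inter> S \<noteq> closed_nbhd V E v \<inter> S)"

definition ld_number :: "'a set \<Rightarrow> ('a \<Rightarrow> 'a \<Rightarrow> bool) \<Rightarrow> nat" where
  "ld_number V E = (LEAST k. \<exists>S. locating_dominating V E S \<and> card S = k)"

end

theory Submission
  imports Defs
begin

text \<open>Open twins \<open>u\<close>, \<open>v\<close> have closed neighbourhoods differing only in \<open>u\<close> and \<open>v\<close>, so a
  locating-dominating set must contain one of them, and a second vertex of \<open>N[u] \<union> N[v]\<close> to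
  dominate or separate the other. Chaining \<open>m + 1\<close> diamonds (each with a pair of degree-2 twins)
  and ending in a cherry (a pair of pendant twins) gives a connected subcubic graph on \<open>4m + 7\<close>
  vertices whose vertex set splits into \<open>m + 2\<close> such twin blocks, so
  \<open>\<gamma>\<^sup>L\<^sup>D \<ge> 2m + 4 > n/2\<close>.\<close>

lemma open_twins_locating_dominating_card:
  assumes G: "simple_graph V E" and S: "locating_dominating V E S" and tw: "open_twins V E d u v"
  shows "2 \<le> card (S \<inter> insert u (closed_nbhd V E v))"
proof -
  let ?N = "nbhd V E v" and ?T = "S \<inter> insert u (closed_nbhd V E v)"
  have uv: "u \<in> V" "v \<in> V" "u \<noteq> v" "nbhd V E u = ?N"
    using tw by (auto simp: open_twins_def)
  have notin: "u \<notin> ?N" "v \<notin> ?N"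
  proof -
    have "x \<notin> nbhd V E x" for x using G by (simp add: simple_graph_def nbhd_def)
    then show "u \<notin> ?N" "v \<notin> ?N" using uv(4) by metis+
  qed
  have fin: "finite ?T"
    using G S by (auto simp: simple_graph_def locating_dominating_def intro: finite_subset)
  have closed: "closed_nbhd V E u = insert u ?N" "closed_nbhd V E v = insert v ?N"
    using uv(4) by (simp_all add: closed_nbhd_def)
  have "u \<in> S \<or> v \<in> S"
  proof (rule ccontr)
    assume "\<not> (u \<in> S \<or> v \<in> S)"
    then have "closed_nbhd V E u \<inter> S = closed_nbhd V E v \<inter> S" by (auto simp: closed)
    with \<open>\<not> (u \<in> S \<or> v \<in> S)\<close> S uv(1-3) show False by (auto simp: locating_dominating_def)
  qed
  moreover have "\<exists>y\<in>?T. y \<noteq> x" if "x \<in> {u, v}" "x \<in> S" for x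
  proof (cases "{u, v} \<subseteq> S")
    case True
    then show ?thesis using uv(3) by (auto simp: closed_nbhd_def)
  next
    case False
    then obtain t where t: "t \<in> {u, v}" "t \<notin> S" by blast
    then have "closed_nbhd V E t \<inter> S \<noteq> {}" using S uv(1,2) by (auto simp: locating_dominating_def)
    then obtain y where "y \<in> ?N" "y \<in> S" using t closed by auto
    then show ?thesis using notin that by (auto simp: closed_nbhd_def)
  qed
  ultimately obtain x y where "x \<in> ?T" "y \<in> ?T" "x \<noteq> y"
    by (metis insertI1 insert_commute IntI closed_nbhd_def)
  then have "{x, y} \<subseteq> ?T" "card {x, y} = 2" by simp_all
  then show ?thesis using card_mono[OF fin] by metis
qed

lemma card_ge_disjoint_blocks:
  assumes "finite S" "finite I" "\<forall>i\<in>I. \<forall>j\<in>I. i \<noteq> j \<longrightarrow> B i \<inter> B j = {}"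
    and "\<And>i. i \<in> I \<Longrightarrow> k \<le> card (S \<inter> B i)"
  shows "k * card I \<le> card S"
proof -
  have "k * card I = (\<Sum>i\<in>I. k)" by simp
  also have "\<dots> \<le> (\<Sum>i\<in>I. card (S \<inter> B i))" by (rule sum_mono) (rule assms(4))
  also have "\<dots> = card (\<Union>i\<in>I. S \<inter> B i)" by (rule card_UN_disjoint[symmetric]) (use assms in auto)
  also have "\<dots> \<le> card S" by (rule card_mono) (use assms in auto)
  finally show ?thesis .
qed

lemma ld_number_geI:
  assumes "\<And>S. locating_dominating V E S \<Longrightarrow> k \<le> card S"
  shows "k \<le> ld_number V E"
proof -
  have "locating_dominating V E V" by (auto simp: locating_dominating_def closed_nbhd_def)
  then have "\<exists>S. locating_dominating V E S \<and> card S = card V" by blast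
  then have "\<exists>S. locating_dominating V E S \<and> card S = ld_number V E"
    unfolding ld_number_def by (rule LeastI)
  then obtain S where "locating_dominating V E S" "card S = ld_number V E" by blast
  then show ?thesis using assms by metis
qed

lemma connected_graphI_descending:
  assumes G: "simple_graph V E" and "(0::nat) \<in> V"
    and pred: "\<And>v. v \<in> V \<Longrightarrow> v \<noteq> 0 \<Longrightarrow> \<exists>w<v. E w v"
  shows "connected_graph V E"
proof -
  have reach: "E\<^sup>*\<^sup>* 0 v" if "v \<in> V" for v
    using that
  proof (induction v rule: less_induct)
    case (less v)
    show ?case
    proof (cases "v = 0")
      case False
      then obtain w where "w < v" "E w v" using pred less.prems by blast
      moreover from \<open>E w v\<close> have "w \<in> V" using G by (auto simp: simple_graph_def)
      ultimately show ?thesis using less.IH by (meson rtranclp.rtrancl_into_rtrancl)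
    qed simp
  qed
  have sym: "symp E\<^sup>*\<^sup>*" by (rule symp_rtranclp) (use G in \<open>auto simp: simple_graph_def symp_def\<close>)
  show ?thesis
    unfolding connected_graph_def
  proof (intro conjI ballI)
    show "V \<noteq> {}" using \<open>0 \<in> V\<close> by blast
    fix u v
    assume "u \<in> V" "v \<in> V"
    then have "E\<^sup>*\<^sup>* u 0" "E\<^sup>*\<^sup>* 0 v" using reach sympD[OF sym] by blast+
    then show "E\<^sup>*\<^sup>* u v" by (rule rtranclp_trans)
  qed
qed

text \<open>Block \<open>k \<le> m\<close> is the diamond on \<open>4k, \<dots>, 4k+3\<close> with twins \<open>4k+1, 4k+2\<close>, and its bottom \<open>4k+3\<close>
  is joined to \<open>4k+4\<close>, the top of the next block; block \<open>m+1\<close> is the cherry with centre \<open>4m+4\<close>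
  and leaves \<open>4m+5, 4m+6\<close>.\<close>

definition diamond_chain :: "nat \<Rightarrow> nat set" where
  "diamond_chain m = {..<4*m+7}"

definition diamond_chain_arc :: "nat \<Rightarrow> nat \<Rightarrow> nat \<Rightarrow> bool" where
  "diamond_chain_arc m u v \<longleftrightarrow>
     (\<exists>k\<le>m+1. u = 4*k \<and> (v = 4*k+1 \<or> v = 4*k+2)) \<or>
     (\<exists>k\<le>m. (u = 4*k+1 \<or> u = 4*k+2) \<and> v = 4*k+3 \<or> u = 4*k+3 \<and> v = 4*k+4)"

definition diamond_chain_adj :: "nat \<Rightarrow> nat \<Rightarrow> nat \<Rightarrow> bool" where
  "diamond_chain_adj m u v \<longleftrightarrow> diamond_chain_arc m u v \<or> diamond_chain_arc m v u"

lemma simple_graph_diamond_chain: "simple_graph (diamond_chain m) (diamond_chain_adj m)"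
  unfolding simple_graph_def diamond_chain_def diamond_chain_adj_def diamond_chain_arc_def
  by auto

lemma nbhd_diamond_chain_subset:
  "nbhd (diamond_chain m) (diamond_chain_adj m) (4*k) \<subseteq> {4*k-1, 4*k+1, 4*k+2}"
  "nbhd (diamond_chain m) (diamond_chain_adj m) (4*k+1) \<subseteq> {4*k, 4*k+3}"
  "nbhd (diamond_chain m) (diamond_chain_adj m) (4*k+2) \<subseteq> {4*k, 4*k+3}"
  "nbhd (diamond_chain m) (diamond_chain_adj m) (4*k+3) \<subseteq> {4*k+1, 4*k+2, 4*k+4}"
  unfolding nbhd_def diamond_chain_adj_def diamond_chain_arc_def
  by (auto; presburger)+

lemma open_twins_diamond_chain_diamond:
  assumes "k \<le> m"
  shows "open_twins (diamond_chain m) (diamond_chain_adj m) 2 (4*k+1) (4*k+2)"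
proof -
  have "nbhd (diamond_chain m) (diamond_chain_adj m) (4*k+1) = {4*k, 4*k+3}"
    and "nbhd (diamond_chain m) (diamond_chain_adj m) (4*k+2) = {4*k, 4*k+3}"
    using assms
    unfolding nbhd_def diamond_chain_def diamond_chain_adj_def diamond_chain_arc_def
    by (auto; presburger)+
  then show ?thesis using assms by (simp add: open_twins_def diamond_chain_def)
qed

lemma open_twins_diamond_chain_cherry:
  "open_twins (diamond_chain m) (diamond_chain_adj m) 1 (4*m+5) (4*m+6)"
proof -
  have "nbhd (diamond_chain m) (diamond_chain_adj m) (4*m+5) = {4*m+4}"
    and "nbhd (diamond_chain m) (diamond_chain_adj m) (4*m+6) = {4*m+4}"
    unfolding nbhd_def diamond_chain_def diamond_chain_adj_def diamond_chain_arc_def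
    by (auto; presburger)+
  then show ?thesis by (simp add: open_twins_def diamond_chain_def)
qed

lemma subcubic_diamond_chain: "subcubic (diamond_chain m) (diamond_chain_adj m)"
  unfolding subcubic_def
proof
  fix v :: nat
  have le3: "card A \<le> 3" if "A \<subseteq> {a, b, c}" for A and a b c :: nat
  proof -
    have "card {a, b, c} \<le> 3" by (simp add: card_insert_if)
    then show ?thesis using card_mono[OF _ that] by simp
  qed
  define k where "k = v div 4"
  have "v = 4*k + v mod 4" "v mod 4 < 4" unfolding k_def by simp_all
  then consider "v = 4*k" | "v = 4*k+1" | "v = 4*k+2" | "v = 4*k+3" by linarith
  then show "card (nbhd (diamond_chain m) (diamond_chain_adj m) v) \<le> 3"
  proof cases
    case 1
    then show ?thesis using le3[OF nbhd_diamond_chain_subset(1)] by simp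
  next
    case 2
    then show ?thesis using le3[of _ "4*k" "4*k+3" "4*k+3"] nbhd_diamond_chain_subset(2)[of m k] by simp
  next
    case 3
    then show ?thesis using le3[of _ "4*k" "4*k+3" "4*k+3"] nbhd_diamond_chain_subset(3)[of m k] by simp
  next
    case 4
    then show ?thesis using le3[OF nbhd_diamond_chain_subset(4)] by simp
  qed
qed

lemma connected_diamond_chain: "connected_graph (diamond_chain m) (diamond_chain_adj m)"
proof (rule connected_graphI_descending[OF simple_graph_diamond_chain])
  show "0 \<in> diamond_chain m" by (simp add: diamond_chain_def)
  fix v
  assume v: "v \<in> diamond_chain m" "v \<noteq> 0"
  define k where "k = v div 4"
  have "v = 4*k + v mod 4" "v mod 4 < 4" unfolding k_def by simp_all
  then consider "v = 4*k" | "v = 4*k+1 \<or> v = 4*k+2" | "v = 4*k+3" by linarith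
  then show "\<exists>w<v. diamond_chain_adj m w v"
  proof cases
    case 1
    with v obtain j where j: "v = 4*j+4" "j \<le> m"
      by (cases k) (auto simp: diamond_chain_def)
    then have "diamond_chain_adj m (4*j+3) v" "4*j+3 < v"
      by (auto simp: diamond_chain_adj_def diamond_chain_arc_def)
    then show ?thesis by blast
  next
    case 2
    with v have "diamond_chain_adj m (4*k) v" "4*k < v"
      by (auto simp: diamond_chain_def diamond_chain_adj_def diamond_chain_arc_def)
    then show ?thesis by blast
  next
    case 3
    with v have "k \<le> m" by (simp add: diamond_chain_def)
    with 3 have "diamond_chain_adj m (4*k+1) v"
      unfolding diamond_chain_adj_def diamond_chain_arc_def by blast
    moreover have "4*k+1 < v" using 3 by simp
    ultimately show ?thesis by blast
  qed
qed

lemma locating_dominating_diamond_chain_card: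
  assumes S: "locating_dominating (diamond_chain m) (diamond_chain_adj m) S"
  shows "2 * (m + 2) \<le> card S"
proof -
  have fin: "finite S"
    using S by (auto simp: locating_dominating_def diamond_chain_def intro: finite_subset)
  have "2 * card {..m+1} \<le> card S"
  proof (rule card_ge_disjoint_blocks[OF fin, where B = "\<lambda>k. {4*k..<4*k+4}"])
    show "finite {..m+1}" by simp
    show "\<forall>i\<in>{..m+1}. \<forall>j\<in>{..m+1}. i \<noteq> j \<longrightarrow> {4*i..<4*i+4} \<inter> {4*j..<4*j+4} = {}"
      by auto
    fix k
    assume k: "k \<in> {..m+1}"
    obtain d where "open_twins (diamond_chain m) (diamond_chain_adj m) d (4*k+1) (4*k+2)"
    proof (cases "k \<le> m")
      case False
      with k have "4*k+1 = 4*m+5" "4*k+2 = 4*m+6" by simp_all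
      then show ?thesis using open_twins_diamond_chain_cherry that by metis
    qed (use open_twins_diamond_chain_diamond that in blast)
    then have "2 \<le> card (S \<inter> insert (4*k+1) (closed_nbhd (diamond_chain m) (diamond_chain_adj m) (4*k+2)))"
      by (rule open_twins_locating_dominating_card[OF simple_graph_diamond_chain S])
    moreover have "insert (4*k+1) (closed_nbhd (diamond_chain m) (diamond_chain_adj m) (4*k+2)) \<subseteq> {4*k..<4*k+4}"
      using nbhd_diamond_chain_subset(3)[of m k] by (auto simp: closed_nbhd_def)
    ultimately show "2 \<le> card (S \<inter> {4*k..<4*k+4})"
      by (meson Int_mono card_mono finite_Int fin order_refl order_trans)
  qed
  then show ?thesis by simp
qed

lemma ld_number_diamond_chain:
  "card (diamond_chain m) < 2 * ld_number (diamond_chain m) (diamond_chain_adj m)"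
proof -
  have "2 * (m + 2) \<le> ld_number (diamond_chain m) (diamond_chain_adj m)"
    by (rule ld_number_geI) (rule locating_dominating_diamond_chain_card)
  then show ?thesis by (simp add: diamond_chain_def)
qed

theorem proposition10:
  shows "(\<forall>N. \<exists>(V::nat set) E. simple_graph V E \<and> connected_graph V E \<and> subcubic V E \<and>
            card V \<ge> N \<and> (\<exists>u v. open_twins V E 1 u v) \<and>
            2 * ld_number V E > card V)
       \<and> (\<forall>N. \<exists>(V::nat set) E. simple_graph V E \<and> connected_graph V E \<and> subcubic V E \<and>
            card V \<ge> N \<and> (\<exists>u v. open_twins V E 2 u v) \<and>
            2 * ld_number V E > card V)"
proof -
  have "\<exists>(V::nat set) E. simple_graph V E \<and> connected_graph V E \<and> subcubic V E \<and> card V \<ge> N \<and>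
      (\<exists>u v. open_twins V E 1 u v) \<and> (\<exists>u v. open_twins V E 2 u v) \<and> 2 * ld_number V E > card V"
    for N
  proof (intro exI conjI)
    show "simple_graph (diamond_chain N) (diamond_chain_adj N)" by (rule simple_graph_diamond_chain)
    show "connected_graph (diamond_chain N) (diamond_chain_adj N)" by (rule connected_diamond_chain)
    show "subcubic (diamond_chain N) (diamond_chain_adj N)" by (rule subcubic_diamond_chain)
    show "N \<le> card (diamond_chain N)" by (simp add: diamond_chain_def)
    show "open_twins (diamond_chain N) (diamond_chain_adj N) 1 (4*N+5) (4*N+6)"
      by (rule open_twins_diamond_chain_cherry)
    show "open_twins (diamond_chain N) (diamond_chain_adj N) 2 1 2"
      using open_twins_diamond_chain_diamond[of 0 N] by (simp add: numeral_2_eq_2)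
    show "card (diamond_chain N) < 2 * ld_number (diamond_chain N) (diamond_chain_adj N)"
      by (rule ld_number_diamond_chain)
  qed
  then show ?thesis by blast
qed

end
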